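(* For integers $n\geq 1$ and $m\geq 1$, the total resonance graph $R_t(C(2m-1,2n+1))$ is connected.
   Context: $C(k,n)$ denotes the graph consisting of $k+1$ cycles of length $n$, say with vertices $(a,b)$, $a\in\mathbb{Z}_n$, $0\le b\le k$, and edges $(a,b)(a+1,b)$ and $(a,b)(a,b+1)$; it is the grid graph of a quadriculated cylinder with $k$ rows of $n$ squares, embedded in the sphere (capping both ends), so its faces are the $kn$ unit squares and two faces bounded by the cycles $b=0$ and $b=k$. The total resonance graph $R_t(G)$ has the perfect matchings of $G$ as vertices, two perfect matchings $M_1,M_2$ being adjacent iff their symmetric difference $M_1\oplus M_2$ is exactly the boundary cycle of one face of the embedding. *)

theory Defs
  imports Main
begin

type_synonym vtx = "nat \<times> nat"
type_synonym edge = "vtx set"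

text \<open>C(k,n): vertices (a,b), a in Z_n (represented by 0..n-1), 0 <= b <= k.\<close>
definition cyl_verts :: "nat \<Rightarrow> nat \<Rightarrow> vtx set" where
  "cyl_verts k n = {(a, b). a < n \<and> b \<le> k}"

definition hedge :: "nat \<Rightarrow> nat \<Rightarrow> nat \<Rightarrow> edge" where
  "hedge n a b = {(a, b), ((a + 1) mod n, b)}"

definition vedge :: "nat \<Rightarrow> nat \<Rightarrow> edge" where
  "vedge a b = {(a, b), (a, b + 1)}"

definition cyl_edges :: "nat \<Rightarrow> nat \<Rightarrow> edge set" where
  "cyl_edges k n =
     {hedge n a b | a b. a < n \<and> b \<le> k} \<union> {vedge a b | a b. a < n \<and> b < k}"

text \<open>Faces of the spherical embedding, given by their boundary edge sets:
  the k*n unit squares and the two capping faces bounded by the cycles b = 0 and b = k.\<close>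
definition square_face :: "nat \<Rightarrow> nat \<Rightarrow> nat \<Rightarrow> edge set" where
  "square_face n a b = {hedge n a b, hedge n a (b + 1), vedge a b, vedge ((a + 1) mod n) b}"

definition cycle_face :: "nat \<Rightarrow> nat \<Rightarrow> edge set" where
  "cycle_face n b = {hedge n a b | a. a < n}"

definition cyl_faces :: "nat \<Rightarrow> nat \<Rightarrow> edge set set" where
  "cyl_faces k n =
     {square_face n a b | a b. a < n \<and> b < k} \<union> {cycle_face n 0, cycle_face n k}"

definition perfect_matching :: "'v set \<Rightarrow> 'v set set \<Rightarrow> 'v set set \<Rightarrow> bool" where
  "perfect_matching V E M \<longleftrightarrow> M \<subseteq> E \<and> (\<forall>v\<in>V. \<exists>!e. e \<in> M \<and> v \<in> e)"

definition pms :: "nat \<Rightarrow> nat \<Rightarrow> edge set set" where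
  "pms k n = {M. perfect_matching (cyl_verts k n) (cyl_edges k n) M}"

definition total_resonance :: "nat \<Rightarrow> nat \<Rightarrow> (edge set \<times> edge set) set" where
  "total_resonance k n =
     {(M1, M2). M1 \<in> pms k n \<and> M2 \<in> pms k n \<and> (M1 - M2) \<union> (M2 - M1) \<in> cyl_faces k n}"

definition graph_connected :: "'a set \<Rightarrow> ('a \<times> 'a) set \<Rightarrow> bool" where
  "graph_connected V R \<longleftrightarrow> V \<noteq> {} \<and> (\<forall>x\<in>V. \<forall>y\<in>V. (x, y) \<in> (R \<inter> V \<times> V)\<^sup>*)"

end

theory Submission
  imports Defs
begin

text \<open>
  Every perfect matching is joined, by flips of unit squares alone, to the matching of vertical
  edges between rows 2i and 2i + 1. Rows are straightened from the bottom up. Once the rows below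
  row r carry these vertical edges, no vertex of row r is matched downwards; as row r is an odd
  cycle it cannot be matched by horizontal edges alone, so it contains a vertical edge at some
  column c whose right neighbour c + 1 is matched horizontally. A horizontal edge can then be pushed directly above the
  one at c + 1 (by induction on the height left above the row, flipping two squares per level), and
  flipping the square at (c + 1, r) adds a vertical edge to row r without touching lower rows.
\<close>

section \<open>Exchanging edges of a perfect matching\<close>

lemma perfect_matching_unique:
  "perfect_matching V E M \<Longrightarrow> v \<in> V \<Longrightarrow> e \<in> M \<Longrightarrow> e' \<in> M \<Longrightarrow> v \<in> e \<Longrightarrow> v \<in> e' \<Longrightarrow> e = e'"
  unfolding perfect_matching_def by blast

lemma perfect_matching_exchange:
  assumes pm: "perfect_matching V E M"
    and "P \<subseteq> M" "Q \<subseteq> E" "\<Union>Q = \<Union>P" "\<Union>P \<subseteq> V"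
    and "pairwise disjnt Q" "{} \<notin> Q" "P \<inter> Q = {}"
  shows "perfect_matching V E (M - P \<union> Q)"
    and "(M - (M - P \<union> Q)) \<union> ((M - P \<union> Q) - M) = P \<union> Q"
proof -
  note unique = perfect_matching_unique[OF pm]
  have "q \<notin> M" if "q \<in> Q" for q
  proof
    assume "q \<in> M"
    obtain v where "v \<in> q" using \<open>q \<in> Q\<close> \<open>{} \<notin> Q\<close> by (metis ex_in_conv)
    then obtain p where "p \<in> P" "v \<in> p" using \<open>q \<in> Q\<close> \<open>\<Union>Q = \<Union>P\<close> by blast
    then have "q = p" using unique[of v q p] \<open>q \<in> M\<close> \<open>v \<in> q\<close> assms(2,5) by blast
    then show False using \<open>p \<in> P\<close> \<open>q \<in> Q\<close> \<open>P \<inter> Q = {}\<close> by blast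
  qed
  then show "(M - (M - P \<union> Q)) \<union> ((M - P \<union> Q) - M) = P \<union> Q"
    using assms(2,8) by blast
  show "perfect_matching V E (M - P \<union> Q)"
    unfolding perfect_matching_def
  proof (intro conjI ballI)
    show "M - P \<union> Q \<subseteq> E"
      using pm \<open>Q \<subseteq> E\<close> unfolding perfect_matching_def by blast
  next
    fix v assume "v \<in> V"
    show "\<exists>!e. e \<in> M - P \<union> Q \<and> v \<in> e"
    proof (cases "v \<in> \<Union>P")
      case True
      then have "e \<notin> M - P" if "v \<in> e" for e
        using unique[OF \<open>v \<in> V\<close>, of e] that \<open>P \<subseteq> M\<close> by blast
      moreover obtain q where "q \<in> Q" "v \<in> q"
        using True \<open>\<Union>Q = \<Union>P\<close> by blast
      moreover have "q' = q" if "q' \<in> Q" "v \<in> q'" for q'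
        using \<open>pairwise disjnt Q\<close> that \<open>q \<in> Q\<close> \<open>v \<in> q\<close>
        unfolding pairwise_def disjnt_def by blast
      ultimately show ?thesis by blast
    next
      case False
      obtain e where "e \<in> M" "v \<in> e"
        using pm \<open>v \<in> V\<close> unfolding perfect_matching_def by blast
      then show ?thesis
        using False \<open>\<Union>Q = \<Union>P\<close> unique[OF \<open>v \<in> V\<close>] by blast
    qed
  qed
qed

lemma perfect_matching_subset_eq:
  assumes "perfect_matching V E M" "perfect_matching V E M'" "M \<subseteq> M'"
    and "\<And>e. e \<in> E \<Longrightarrow> e \<noteq> {} \<and> e \<subseteq> V"
  shows "M = M'"
proof
  show "M' \<subseteq> M"
  proof
    fix e assume "e \<in> M'"
    then have "e \<in> E" using assms(2) unfolding perfect_matching_def by blast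
    then obtain v where "v \<in> e" "v \<in> V" using assms(4) by blast
    then obtain e' where "e' \<in> M" "v \<in> e'"
      using assms(1) unfolding perfect_matching_def by blast
    then show "e \<in> M"
      using perfect_matching_unique[OF assms(2) \<open>v \<in> V\<close> \<open>e \<in> M'\<close>, of e'] \<open>v \<in> e\<close> \<open>M \<subseteq> M'\<close>
      by blast
  qed
qed (rule assms(3))

definition next_col :: "nat \<Rightarrow> nat \<Rightarrow> nat" where
  "next_col N a = Suc a mod N"

lemma next_col_less: "0 < N \<Longrightarrow> next_col N a < N"
  by (simp add: next_col_def)

lemma next_col_mod: "next_col N (i mod N) = Suc i mod N"
  by (simp add: next_col_def mod_Suc_eq)

lemma next_col_neq: "2 \<le> N \<Longrightarrow> a < N \<Longrightarrow> next_col N a \<noteq> a"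
  by (simp add: next_col_def mod_Suc)

lemma next_col_inj: "a < N \<Longrightarrow> b < N \<Longrightarrow> next_col N a = next_col N b \<Longrightarrow> a = b"
  by (simp add: next_col_def mod_Suc split: if_splits)

lemma next_col_next_col_neq:
  assumes "3 \<le> N" "a < N"
  shows "next_col N (next_col N a) \<noteq> a"
  using assms by (simp add: next_col_def mod_Suc split: if_splits)

lemma ex_next_col_change:
  assumes "c < N" "P c" "z < N" "\<not> P z"
  shows "\<exists>x<N. P x \<and> \<not> P (next_col N x)"
proof (rule ccontr)
  assume "\<not> ?thesis"
  then have step: "P (next_col N x)" if "x < N" "P x" for x
    using that by blast
  have "P ((c + i) mod N)" for i
  proof (induction i)
    case 0
    then show ?case using assms by simp
  next
    case (Suc i)
    then show ?case
      using step[of "(c + i) mod N"] next_col_mod[of N "c + i"] assms(1) by simp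
  qed
  from this[of "N - c + z"] show False
    using assms by simp
qed

lemma odd_cycle_no_alternation:
  assumes "odd N"
  shows "\<not> (\<forall>x<N. g (next_col N x) \<longleftrightarrow> \<not> g x)"
proof
  assume alt: "\<forall>x<N. g (next_col N x) \<longleftrightarrow> \<not> g x"
  have "g (i mod N) \<longleftrightarrow> (g 0 \<longleftrightarrow> even i)" for i
  proof (induction i)
    case (Suc i)
    have "0 < N" using assms by (rule odd_pos)
    then show ?case
      using Suc alt[rule_format, of "i mod N"] next_col_mod[of N i] by simp
  qed simp
  from this[of N] assms show False by simp
qed

section \<open>Edges and square flips\<close>

lemma hedge_next_col: "hedge N a b = {(a, b), (next_col N a, b)}"
  by (simp add: hedge_def next_col_def)

lemma hedge_eq_imp_same_row: "hedge N x y = hedge N a b \<Longrightarrow> y = b"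
  by (auto simp: hedge_def doubleton_eq_iff)

lemma hedge_inj:
  assumes "3 \<le> N" "a < N" "x < N" "hedge N x b = hedge N a b"
  shows "x = a"
  using assms next_col_neq[of N] next_col_next_col_neq[of N]
  by (auto simp: hedge_next_col doubleton_eq_iff)

lemma vedge_eq_iff: "vedge x y = vedge a b \<longleftrightarrow> x = a \<and> y = b"
  by (auto simp: vedge_def doubleton_eq_iff)

lemma hedge_neq_vedge: "hedge N x y \<noteq> vedge a b" "vedge a b \<noteq> hedge N x y"
  by (auto simp: hedge_def vedge_def doubleton_eq_iff)

lemma hedge_in_cyl_edges: "a < N \<Longrightarrow> b \<le> k \<Longrightarrow> hedge N a b \<in> cyl_edges k N"
  unfolding cyl_edges_def by blast

lemma vedge_in_cyl_edges: "a < N \<Longrightarrow> b < k \<Longrightarrow> vedge a b \<in> cyl_edges k N"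
  unfolding cyl_edges_def by blast

lemma cyl_edgeE:
  assumes "e \<in> cyl_edges k N"
  obtains a b where "a < N" "b \<le> k" "e = hedge N a b"
    | a b where "a < N" "b < k" "e = vedge a b"
  using assms unfolding cyl_edges_def by blast

lemma cyl_edge_subset_verts: "0 < N \<Longrightarrow> e \<in> cyl_edges k N \<Longrightarrow> e \<noteq> {} \<and> e \<subseteq> cyl_verts k N"
  by (erule cyl_edgeE) (auto simp: cyl_verts_def hedge_next_col next_col_less vedge_def)

definition square_hsides :: "nat \<Rightarrow> nat \<Rightarrow> nat \<Rightarrow> edge set" where
  "square_hsides N a b = {hedge N a b, hedge N a (Suc b)}"

definition square_vsides :: "nat \<Rightarrow> nat \<Rightarrow> nat \<Rightarrow> edge set" where
  "square_vsides N a b = {vedge a b, vedge (next_col N a) b}"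

definition edges_below :: "nat \<Rightarrow> nat \<Rightarrow> edge set" where
  "edges_below N s = {hedge N a b | a b. b < s} \<union> {vedge a b | a b. b < s}"

lemma hedge_in_edges_below: "b < s \<Longrightarrow> hedge N a b \<in> edges_below N s"
  unfolding edges_below_def by blast

lemma vedge_in_edges_below: "b < s \<Longrightarrow> vedge a b \<in> edges_below N s"
  unfolding edges_below_def by blast

lemma inter_edges_below_eq_mono:
  assumes "A \<inter> edges_below N t = B \<inter> edges_below N t" "s \<le> t"
  shows "A \<inter> edges_below N s = B \<inter> edges_below N s"
proof -
  have "edges_below N s \<subseteq> edges_below N t"
    using \<open>s \<le> t\<close> unfolding edges_below_def by fastforce
  then show ?thesis
    using assms(1) by blast
qed

lemma square_face_eq: "square_face N a b = square_hsides N a b \<union> square_vsides N a b"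
  by (auto simp: square_face_def square_hsides_def square_vsides_def next_col_def)

lemma square_face_disjoint_edges_below: "square_face N a b \<inter> edges_below N b = {}"
  unfolding square_face_def edges_below_def
  by (auto simp: hedge_neq_vedge vedge_eq_iff dest: hedge_eq_imp_same_row)

lemma square_hsides_subset_cyl_edges:
  "a < N \<Longrightarrow> b < k \<Longrightarrow> square_hsides N a b \<subseteq> cyl_edges k N"
  by (simp add: square_hsides_def hedge_in_cyl_edges)

lemma square_vsides_subset_cyl_edges:
  "0 < N \<Longrightarrow> a < N \<Longrightarrow> b < k \<Longrightarrow> square_vsides N a b \<subseteq> cyl_edges k N"
  by (simp add: square_vsides_def vedge_in_cyl_edges next_col_less)

lemma Union_square_hsides_eq_Union_square_vsides:
  "\<Union>(square_hsides N a b) = \<Union>(square_vsides N a b)"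
  by (auto simp: square_hsides_def square_vsides_def hedge_next_col vedge_def)

lemma pairwise_disjnt_square_hsides: "pairwise disjnt (square_hsides N a b)"
  by (auto simp: square_hsides_def pairwise_insert disjnt_def hedge_next_col)

lemma pairwise_disjnt_square_vsides:
  "2 \<le> N \<Longrightarrow> a < N \<Longrightarrow> pairwise disjnt (square_vsides N a b)"
  using next_col_neq[of N a] by (auto simp: square_vsides_def pairwise_insert disjnt_def vedge_def)

lemma square_hsides_inter_square_vsides: "square_hsides N a b \<inter> square_vsides N a b = {}"
  by (auto simp: square_hsides_def square_vsides_def hedge_neq_vedge)

lemma square_flip:
  assumes M: "M \<in> pms k N" and "2 \<le> N" "a < N" "b < k"
    and PQ: "{P, Q} = {square_hsides N a b, square_vsides N a b}" and "P \<subseteq> M"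
  shows "M - P \<union> Q \<in> pms k N"
    and "(M, M - P \<union> Q) \<in> total_resonance k N"
    and "(M - P \<union> Q) \<inter> edges_below N b = M \<inter> edges_below N b"
proof -
  let ?H = "square_hsides N a b" and ?V = "square_vsides N a b"
  have "0 < N" using \<open>2 \<le> N\<close> by simp
  have PQ_cases: "P = ?H \<and> Q = ?V \<or> P = ?V \<and> Q = ?H"
    using PQ by (auto simp: doubleton_eq_iff)
  then have "P \<union> Q = square_face N a b"
    by (auto simp: square_face_eq)
  moreover have "square_face N a b \<subseteq> cyl_edges k N"
    using square_hsides_subset_cyl_edges[OF assms(3,4)]
      square_vsides_subset_cyl_edges[OF \<open>0 < N\<close> assms(3,4)]
    by (simp add: square_face_eq)
  ultimately have "Q \<subseteq> cyl_edges k N" "\<Union>P \<subseteq> cyl_verts k N" "{} \<notin> Q"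
    using cyl_edge_subset_verts[OF \<open>0 < N\<close>] by blast+
  moreover have "\<Union>Q = \<Union>P" "pairwise disjnt Q" "P \<inter> Q = {}"
    using PQ_cases Union_square_hsides_eq_Union_square_vsides[of N a b]
      pairwise_disjnt_square_hsides[of N a b] pairwise_disjnt_square_vsides[OF assms(2,3), of b]
      square_hsides_inter_square_vsides[of N a b]
    by (elim disjE conjE; simp add: Int_commute)+
  moreover have pm: "perfect_matching (cyl_verts k N) (cyl_edges k N) M"
    using M by (simp add: pms_def)
  ultimately have "perfect_matching (cyl_verts k N) (cyl_edges k N) (M - P \<union> Q)"
    and diff: "(M - (M - P \<union> Q)) \<union> ((M - P \<union> Q) - M) = P \<union> Q"
    using perfect_matching_exchange[OF pm \<open>P \<subseteq> M\<close>] by blast+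
  then show "M - P \<union> Q \<in> pms k N"
    by (simp add: pms_def)
  moreover have "square_face N a b \<in> cyl_faces k N"
    using assms(3,4) unfolding cyl_faces_def by blast
  ultimately show "(M, M - P \<union> Q) \<in> total_resonance k N"
    using M diff \<open>P \<union> Q = square_face N a b\<close> by (simp add: total_resonance_def)
  show "(M - P \<union> Q) \<inter> edges_below N b = M \<inter> edges_below N b"
    using square_face_disjoint_edges_below[of N a b] \<open>P \<union> Q = square_face N a b\<close> by blast
qed

lemma rtrancl_total_resonance_pms:
  "(M, M') \<in> (total_resonance k N)\<^sup>* \<Longrightarrow> M \<in> pms k N \<Longrightarrow> M' \<in> pms k N"
  by (induction rule: rtrancl_induct) (auto simp: total_resonance_def)

lemma pms_unique:
  "M \<in> pms k N \<Longrightarrow> v \<in> cyl_verts k N \<Longrightarrow> e \<in> M \<Longrightarrow> e' \<in> M \<Longrightarrow> v \<in> e \<Longrightarrow> v \<in> e' \<Longrightarrow> e = e'"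
  unfolding pms_def using perfect_matching_unique by (metis mem_Collect_eq)

lemma pms_hedge_vedge_disjoint:
  assumes "M \<in> pms k N" "x < N" "y \<le> k" "hedge N a b \<in> M" "vedge c d \<in> M"
    "(x, y) \<in> hedge N a b"
  shows "(x, y) \<notin> vedge c d"
proof
  assume "(x, y) \<in> vedge c d"
  then have "hedge N a b = vedge c d"
    using pms_unique[OF assms(1) _ assms(4,5,6)] assms(2,3) by (simp add: cyl_verts_def)
  then show False
    by (simp add: hedge_neq_vedge)
qed

definition matched_down :: "edge set \<Rightarrow> nat \<Rightarrow> nat \<Rightarrow> bool" where
  "matched_down M x s \<longleftrightarrow> 0 < s \<and> vedge x (s - 1) \<in> M"

lemma pms_cover_cases:
  assumes M: "M \<in> pms k N" and "x < N" "y \<le> k"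
  shows "hedge N x y \<in> M \<or> (\<exists>a<N. next_col N a = x \<and> hedge N a y \<in> M)
    \<or> (y < k \<and> vedge x y \<in> M) \<or> matched_down M x y"
proof -
  obtain e where "e \<in> M" "(x, y) \<in> e"
    using M assms(2,3) unfolding pms_def perfect_matching_def cyl_verts_def by blast
  have "e \<in> cyl_edges k N"
    using M \<open>e \<in> M\<close> unfolding pms_def perfect_matching_def by blast
  then show ?thesis
    using \<open>e \<in> M\<close> \<open>(x, y) \<in> e\<close>
    by (cases rule: cyl_edgeE) (auto simp: hedge_next_col vedge_def matched_down_def)
qed

lemma cover_beside_vertical:
  assumes M: "M \<in> pms k N" and "c < N" "s \<le> k"
    and "vedge c s \<in> M \<or> matched_down M c s" and "\<not> matched_down M (next_col N c) s"
  shows "hedge N (next_col N c) s \<in> M \<or> (s < k \<and> vedge (next_col N c) s \<in> M)"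
proof -
  have "0 < N" using \<open>c < N\<close> by simp
  have "\<exists>d. vedge c d \<in> M \<and> (c, s) \<in> vedge c d"
  proof (cases "vedge c s \<in> M")
    case True
    then show ?thesis by (auto simp: vedge_def)
  next
    case False
    then have "0 < s" "vedge c (s - 1) \<in> M"
      using assms(4) by (auto simp: matched_down_def)
    then show ?thesis by (intro exI[of _ "s - 1"]) (simp add: vedge_def)
  qed
  then have "hedge N c s \<notin> M"
    using pms_hedge_vedge_disjoint[OF M assms(2,3)] by (auto simp: hedge_next_col)
  moreover have "a = c" if "a < N" "next_col N a = next_col N c" for a
    using next_col_inj[OF that(1) assms(2) that(2)] .
  ultimately show ?thesis
    using pms_cover_cases[OF M next_col_less[OF \<open>0 < N\<close>] assms(3), of c] assms(5) by blast
qed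

lemma not_matched_down_above_hedge:
  assumes "M \<in> pms k N" "x < N" "s \<le> k" "hedge N a s \<in> M" "(x, s) \<in> hedge N a s"
  shows "\<not> matched_down M x (Suc s)"
  using pms_hedge_vedge_disjoint[OF assms(1-4) _ assms(5), of x s]
  by (auto simp: matched_down_def vedge_def)

lemma row_has_vedge:
  assumes M: "M \<in> pms k N" and "3 \<le> N" "odd N" "r \<le> k"
    and no_down: "\<forall>x<N. \<not> matched_down M x r"
  shows "\<exists>x<N. vedge x r \<in> M"
proof (rule ccontr)
  assume no_vedge: "\<not> ?thesis"
  have "0 < N" using \<open>3 \<le> N\<close> by simp
  have "hedge N (next_col N x) r \<in> M \<longleftrightarrow> hedge N x r \<notin> M" if "x < N" for x
  proof (intro iffI notI)
    assume "hedge N (next_col N x) r \<in> M" "hedge N x r \<in> M"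
    moreover have "(next_col N x, r) \<in> hedge N (next_col N x) r \<inter> hedge N x r"
      by (simp add: hedge_next_col)
    ultimately have "hedge N (next_col N x) r = hedge N x r"
      using pms_unique[OF M, of "(next_col N x, r)"] next_col_less[OF \<open>0 < N\<close>] \<open>r \<le> k\<close>
      by (auto simp: cyl_verts_def)
    then show False
      using hedge_inj[OF \<open>3 \<le> N\<close> that next_col_less[OF \<open>0 < N\<close>]] next_col_neq[of N x] \<open>3 \<le> N\<close> that
      by simp
  next
    assume "hedge N x r \<notin> M"
    then show "hedge N (next_col N x) r \<in> M"
      using pms_cover_cases[OF M next_col_less[OF \<open>0 < N\<close>] \<open>r \<le> k\<close>, of x] no_down no_vedge
        next_col_less[OF \<open>0 < N\<close>] next_col_inj[OF _ that]
      by blast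
  qed
  then show False
    using odd_cycle_no_alternation[OF \<open>odd N\<close>, of "\<lambda>x. hedge N x r \<in> M"] by blast
qed

section \<open>Straightening the rows\<close>

lemma reach_hedge_by_flip:
  assumes M: "M \<in> pms k N" and "2 \<le> N" "x < N" "s < k" "square_vsides N x s \<subseteq> M"
  shows "\<exists>M'. (M, M') \<in> (total_resonance k N)\<^sup>* \<and> hedge N x s \<in> M'
    \<and> M' \<inter> edges_below N s = M \<inter> edges_below N s"
proof (intro exI conjI)
  let ?M' = "M - square_vsides N x s \<union> square_hsides N x s"
  note flip = square_flip[OF assms(1-4) insert_commute assms(5)]
  show "(M, ?M') \<in> (total_resonance k N)\<^sup>*"
    using flip(2) by (rule r_into_rtrancl)
  show "hedge N x s \<in> ?M'"
    by (simp add: square_hsides_def)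
  show "?M' \<inter> edges_below N s = M \<inter> edges_below N s"
    by (rule flip(3))
qed

lemma reach_hedge_by_two_flips:
  assumes M: "M \<in> pms k N" and "2 \<le> N" "x < N" "s < k"
    and "vedge x s \<in> M" "square_hsides N (next_col N x) s \<subseteq> M"
  shows "\<exists>M'. (M, M') \<in> (total_resonance k N)\<^sup>* \<and> hedge N x s \<in> M'
    \<and> M' \<inter> edges_below N s = M \<inter> edges_below N s"
proof -
  have "next_col N x < N" using \<open>2 \<le> N\<close> by (simp add: next_col_less)
  define M1 where "M1 = M - square_hsides N (next_col N x) s \<union> square_vsides N (next_col N x) s"
  note flip = square_flip[OF M \<open>2 \<le> N\<close> \<open>next_col N x < N\<close> \<open>s < k\<close> refl assms(6), folded M1_def]
  have "square_vsides N x s \<subseteq> M1"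
    using \<open>vedge x s \<in> M\<close> by (auto simp: M1_def square_vsides_def square_hsides_def hedge_neq_vedge)
  obtain M2 where "(M1, M2) \<in> (total_resonance k N)\<^sup>*" "hedge N x s \<in> M2"
    "M2 \<inter> edges_below N s = M1 \<inter> edges_below N s"
    using reach_hedge_by_flip[OF flip(1) assms(2-4) \<open>square_vsides N x s \<subseteq> M1\<close>]
    by (elim exE conjE)
  moreover have "(M, M2) \<in> (total_resonance k N)\<^sup>*"
    using flip(2) \<open>(M1, M2) \<in> (total_resonance k N)\<^sup>*\<close> by (rule converse_rtrancl_into_rtrancl)
  ultimately show ?thesis
    using flip(3) by auto
qed

lemma reach_hedge_beside_vertical:
  assumes "2 \<le> N" "M \<in> pms k N" "c < N" "s \<le> k"
    and "vedge c s \<in> M \<or> matched_down M c s"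
    and "\<not> matched_down M (next_col N c) s" "\<not> matched_down M (next_col N (next_col N c)) s"
  shows "\<exists>M'. (M, M') \<in> (total_resonance k N)\<^sup>* \<and> hedge N (next_col N c) s \<in> M'
    \<and> M' \<inter> edges_below N s = M \<inter> edges_below N s"
  using assms(2-)
proof (induction "k - s" arbitrary: M c s rule: less_induct)
  case less
  note M = \<open>M \<in> pms k N\<close>
  have "0 < N" using \<open>2 \<le> N\<close> by simp
  define x1 where "x1 = next_col N c"
  define x2 where "x2 = next_col N x1"
  have "x1 < N" "x2 < N" "next_col N x2 < N"
    using next_col_less[OF \<open>0 < N\<close>] by (auto simp: x1_def x2_def)
  from cover_beside_vertical[OF M less.prems(2-5)]
  consider (hedge) "hedge N x1 s \<in> M" | (vedge) "s < k" "vedge x1 s \<in> M"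
    unfolding x1_def by blast
  then show ?case
  proof cases
    case hedge
    then show ?thesis unfolding x1_def[symmetric] by blast
  next
    case vedge
    have "\<not> matched_down M x2 s"
      using less.prems(6) by (simp add: x1_def x2_def)
    with cover_beside_vertical[OF M \<open>x1 < N\<close> \<open>s \<le> k\<close>] vedge
    consider (hedge2) "hedge N x2 s \<in> M" | (vedge2) "vedge x2 s \<in> M"
      unfolding x2_def by blast
    then show ?thesis
    proof cases
      case hedge2
      \<comment> \<open>Bring a horizontal edge above (x2, s) first; then flip the squares at x2 and at x1.\<close>
      have "\<not> matched_down M x2 (Suc s)" "\<not> matched_down M (next_col N x2) (Suc s)"
        using not_matched_down_above_hedge[OF M _ \<open>s \<le> k\<close> hedge2] \<open>x2 < N\<close> \<open>next_col N x2 < N\<close>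
        by (simp_all add: hedge_next_col)
      moreover have "k - Suc s < k - s" "matched_down M x1 (Suc s)"
        using vedge by (auto simp: matched_down_def)
      ultimately obtain M1 where M1: "(M, M1) \<in> (total_resonance k N)\<^sup>*" "hedge N x2 (Suc s) \<in> M1"
        "M1 \<inter> edges_below N (Suc s) = M \<inter> edges_below N (Suc s)"
        using less.hyps[OF _ M \<open>x1 < N\<close>, of "Suc s"] vedge by (auto simp: x2_def)
      have "vedge x1 s \<in> M1" "square_hsides N x2 s \<subseteq> M1"
        using M1 hedge2 vedge hedge_in_edges_below[of s "Suc s"] vedge_in_edges_below[of s "Suc s"]
        by (auto simp: square_hsides_def)
      then obtain M2 where M2: "(M1, M2) \<in> (total_resonance k N)\<^sup>*" "hedge N x1 s \<in> M2"
        "M2 \<inter> edges_below N s = M1 \<inter> edges_below N s"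
        using reach_hedge_by_two_flips[OF rtrancl_total_resonance_pms[OF M1(1) M] \<open>2 \<le> N\<close>
            \<open>x1 < N\<close> \<open>s < k\<close>] by (auto simp: x2_def)
      have "(M, M2) \<in> (total_resonance k N)\<^sup>*"
        using M1(1) M2(1) by (rule rtrancl_trans)
      moreover have "M2 \<inter> edges_below N s = M \<inter> edges_below N s"
        using M2(3) inter_edges_below_eq_mono[OF M1(3), of s] by simp
      ultimately show ?thesis
        using M2(2) unfolding x1_def[symmetric] by blast
    next
      case vedge2
      then have "square_vsides N x1 s \<subseteq> M"
        using \<open>vedge x1 s \<in> M\<close> by (simp add: square_vsides_def x2_def)
      from reach_hedge_by_flip[OF M \<open>2 \<le> N\<close> \<open>x1 < N\<close> \<open>s < k\<close> this]
      show ?thesis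
        unfolding x1_def[symmetric] .
    qed
  qed
qed

lemma reach_more_vedges_in_row:
  assumes M: "M \<in> pms k N" and "3 \<le> N" "odd N" "r < k"
    and no_down: "\<forall>x<N. \<not> matched_down M x r"
    and "z < N" "vedge z r \<notin> M"
  shows "\<exists>M'. (M, M') \<in> (total_resonance k N)\<^sup>*
    \<and> {x. x < N \<and> vedge x r \<notin> M'} \<subset> {x. x < N \<and> vedge x r \<notin> M}
    \<and> M' \<inter> edges_below N r = M \<inter> edges_below N r"
proof -
  have "2 \<le> N" "0 < N" "r \<le> k" using assms(2,4) by simp_all
  obtain c0 where "c0 < N" "vedge c0 r \<in> M"
    using row_has_vedge[OF M \<open>3 \<le> N\<close> \<open>odd N\<close> \<open>r \<le> k\<close> no_down] by blast
  then obtain c where c: "c < N" "vedge c r \<in> M" "vedge (next_col N c) r \<notin> M"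
    using ex_next_col_change[of c0 N "\<lambda>x. vedge x r \<in> M"] assms(6,7) by blast
  define x1 where "x1 = next_col N c"
  have "x1 < N" "next_col N x1 < N"
    using next_col_less[OF \<open>0 < N\<close>] by (simp_all add: x1_def)
  have "hedge N x1 r \<in> M"
    using cover_beside_vertical[OF M \<open>c < N\<close> \<open>r \<le> k\<close>] c no_down \<open>x1 < N\<close>
    by (auto simp: x1_def)
  then have "\<not> matched_down M (next_col N x1) (Suc r)"
    using not_matched_down_above_hedge[OF M \<open>next_col N x1 < N\<close> \<open>r \<le> k\<close>]
    by (simp add: hedge_next_col)
  \<comment> \<open>Put a horizontal edge directly above the one at (x1, r), then flip the square at (x1, r).\<close>
  then obtain M1 where M1: "(M, M1) \<in> (total_resonance k N)\<^sup>*" "hedge N x1 (Suc r) \<in> M1"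
    "M1 \<inter> edges_below N (Suc r) = M \<inter> edges_below N (Suc r)"
    using reach_hedge_beside_vertical[OF \<open>2 \<le> N\<close> M \<open>c < N\<close>, of "Suc r"] c assms(4)
    by (auto simp: matched_down_def x1_def)
  have "square_hsides N x1 r \<subseteq> M1"
    using M1 \<open>hedge N x1 r \<in> M\<close> hedge_in_edges_below[of r "Suc r"] by (auto simp: square_hsides_def)
  define M2 where "M2 = M1 - square_hsides N x1 r \<union> square_vsides N x1 r"
  note flip = square_flip[OF rtrancl_total_resonance_pms[OF M1(1) M] \<open>2 \<le> N\<close> \<open>x1 < N\<close> \<open>r < k\<close>
      refl \<open>square_hsides N x1 r \<subseteq> M1\<close>, folded M2_def]
  have "vedge x r \<in> M2" if "vedge x r \<in> M" for x
    using that M1(3) vedge_in_edges_below[of r "Suc r"]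
    by (auto simp: M2_def square_hsides_def hedge_neq_vedge)
  moreover have "vedge x1 r \<in> M2"
    by (simp add: M2_def square_vsides_def)
  ultimately have "{x. x < N \<and> vedge x r \<notin> M2} \<subset> {x. x < N \<and> vedge x r \<notin> M}"
    using c(3) \<open>x1 < N\<close> unfolding x1_def by blast
  moreover have "(M, M2) \<in> (total_resonance k N)\<^sup>*"
    using M1(1) flip(2) by (rule rtrancl_into_rtrancl)
  moreover have "M2 \<inter> edges_below N r = M \<inter> edges_below N r"
    using flip(3) inter_edges_below_eq_mono[OF M1(3), of r] by simp
  ultimately show ?thesis
    by blast
qed

lemma reach_vedge_row:
  assumes M: "M \<in> pms k N" and "3 \<le> N" "odd N" "r < k"
    and "\<forall>x<N. \<not> matched_down M x r"
  shows "\<exists>M'. (M, M') \<in> (total_resonance k N)\<^sup>* \<and> (\<forall>x<N. vedge x r \<in> M')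
    \<and> M' \<inter> edges_below N r = M \<inter> edges_below N r"
  using M assms(5)
proof (induction "card {x. x < N \<and> vedge x r \<notin> M}" arbitrary: M rule: less_induct)
  case less
  show ?case
  proof (cases "\<forall>x<N. vedge x r \<in> M")
    case True
    then show ?thesis by blast
  next
    case False
    then obtain z where "z < N" "vedge z r \<notin> M" by blast
    from reach_more_vedges_in_row[OF less.prems(1) assms(2-4) less.prems(2) this]
    obtain M1 where M1: "(M, M1) \<in> (total_resonance k N)\<^sup>*"
      "{x. x < N \<and> vedge x r \<notin> M1} \<subset> {x. x < N \<and> vedge x r \<notin> M}"
      "M1 \<inter> edges_below N r = M \<inter> edges_below N r"
      by (elim exE conjE)
    have "card {x. x < N \<and> vedge x r \<notin> M1} < card {x. x < N \<and> vedge x r \<notin> M}"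
      using M1(2) by (rule psubset_card_mono[rotated]) simp
    moreover have "M1 \<in> pms k N"
      using rtrancl_total_resonance_pms[OF M1(1) less.prems(1)] .
    moreover have "\<forall>x<N. \<not> matched_down M1 x r"
    proof (intro allI impI notI)
      fix x assume "x < N" "matched_down M1 x r"
      then have "vedge x (r - 1) \<in> M1 \<inter> edges_below N r"
        using vedge_in_edges_below[of "r - 1" r] by (auto simp: matched_down_def)
      then have "matched_down M x r"
        using M1(3) \<open>matched_down M1 x r\<close> by (auto simp: matched_down_def)
      then show False
        using less.prems(2) \<open>x < N\<close> by blast
    qed
    ultimately have "\<exists>M2. (M1, M2) \<in> (total_resonance k N)\<^sup>* \<and> (\<forall>x<N. vedge x r \<in> M2)
      \<and> M2 \<inter> edges_below N r = M1 \<inter> edges_below N r"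
      by (rule less.hyps)
    then obtain M2 where M2: "(M1, M2) \<in> (total_resonance k N)\<^sup>*" "\<forall>x<N. vedge x r \<in> M2"
      "M2 \<inter> edges_below N r = M1 \<inter> edges_below N r"
      by (elim exE conjE)
    have "(M, M2) \<in> (total_resonance k N)\<^sup>*"
      using M1(1) M2(1) by (rule rtrancl_trans)
    moreover have "M2 \<inter> edges_below N r = M \<inter> edges_below N r"
      using M1(3) M2(3) by simp
    ultimately show ?thesis
      using M2(2) by blast
  qed
qed

definition vertical_matching :: "nat \<Rightarrow> nat \<Rightarrow> edge set" where
  "vertical_matching N m = {vedge x (2 * i) | x i. x < N \<and> i < m}"

lemma vertical_matching_Suc:
  "vertical_matching N (Suc j) = vertical_matching N j \<union> {vedge x (2 * j) | x. x < N}"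
  unfolding vertical_matching_def less_Suc_eq by blast

lemma vertical_matching_subset_edges_below: "vertical_matching N j \<subseteq> edges_below N (2 * j)"
proof
  fix e assume "e \<in> vertical_matching N j"
  then obtain x i where "e = vedge x (2 * i)" "i < j"
    unfolding vertical_matching_def by blast
  then show "e \<in> edges_below N (2 * j)"
    using vedge_in_edges_below[of "2 * i" "2 * j"] by simp
qed

lemma vertical_matching_pms:
  assumes "1 \<le> m"
  shows "vertical_matching N m \<in> pms (2 * m - 1) N"
  unfolding pms_def perfect_matching_def
proof (intro CollectI conjI ballI)
  show "vertical_matching N m \<subseteq> cyl_edges (2 * m - 1) N"
    unfolding vertical_matching_def using assms by (auto intro!: vedge_in_cyl_edges)
next
  fix v assume "v \<in> cyl_verts (2 * m - 1) N"
  then obtain x y where v: "v = (x, y)" "x < N" "y < 2 * m"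
    using assms by (auto simp: cyl_verts_def)
  let ?e = "vedge x (2 * (y div 2))"
  have "y = 2 * (y div 2) \<or> y = Suc (2 * (y div 2))"
    by presburger
  then have "v \<in> ?e"
    using v(1) by (auto simp: vedge_def)
  moreover have "?e \<in> vertical_matching N m"
  proof -
    have "y div 2 < m" using v(3) by simp
    then show ?thesis
      using v(2) unfolding vertical_matching_def by blast
  qed
  moreover have "e = ?e" if e: "e \<in> vertical_matching N m" "v \<in> e" for e
  proof -
    obtain x' i where "e = vedge x' (2 * i)"
      using e(1) unfolding vertical_matching_def by blast
    moreover have "x' = x" "y = 2 * i \<or> y = Suc (2 * i)"
      using e(2) v(1) by (auto simp: vedge_def calculation)
    ultimately show ?thesis
      by auto
  qed
  ultimately show "\<exists>!e. e \<in> vertical_matching N m \<and> v \<in> e"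
    by blast
qed

lemma reach_superset_of_vertical_matching:
  assumes M: "M \<in> pms k N" and "3 \<le> N" "odd N"
  shows "2 * j \<le> Suc k \<Longrightarrow> \<exists>M'. (M, M') \<in> (total_resonance k N)\<^sup>* \<and> vertical_matching N j \<subseteq> M'"
proof (induction j)
  case 0
  show ?case by (auto simp: vertical_matching_def)
next
  case (Suc j)
  then obtain M1 where M1: "(M, M1) \<in> (total_resonance k N)\<^sup>*" "vertical_matching N j \<subseteq> M1"
    by auto
  have M1_pms: "M1 \<in> pms k N"
    using rtrancl_total_resonance_pms[OF M1(1) M] .
  have "2 * j < k" using Suc.prems by simp
  have "\<forall>x<N. \<not> matched_down M1 x (2 * j)"
  proof (intro allI impI notI)
    fix x assume "x < N"
    assume "matched_down M1 x (2 * j)"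
    then have "0 < j" and up: "vedge x (2 * j - 1) \<in> M1"
      by (auto simp: matched_down_def)
    have "j - 1 < j" using \<open>0 < j\<close> by simp
    then have down: "vedge x (2 * (j - 1)) \<in> M1"
      using M1(2) \<open>x < N\<close> unfolding vertical_matching_def by blast
    have "(x, 2 * j - 1) \<in> cyl_verts k N"
      using \<open>x < N\<close> \<open>2 * j < k\<close> by (simp add: cyl_verts_def)
    moreover have "(x, 2 * j - 1) \<in> vedge x (2 * j - 1)" "(x, 2 * j - 1) \<in> vedge x (2 * (j - 1))"
      using \<open>0 < j\<close> by (auto simp: vedge_def)
    ultimately have "vedge x (2 * j - 1) = vedge x (2 * (j - 1))"
      using pms_unique[OF M1_pms _ up down] by blast
    then show False
      using \<open>0 < j\<close> by (simp add: vedge_eq_iff)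
  qed
  then obtain M2 where M2: "(M1, M2) \<in> (total_resonance k N)\<^sup>*" "\<forall>x<N. vedge x (2 * j) \<in> M2"
    "M2 \<inter> edges_below N (2 * j) = M1 \<inter> edges_below N (2 * j)"
    using reach_vedge_row[OF M1_pms assms(2,3) \<open>2 * j < k\<close>] by blast
  have "(M, M2) \<in> (total_resonance k N)\<^sup>*"
    using M1(1) M2(1) by (rule rtrancl_trans)
  moreover have "vertical_matching N (Suc j) \<subseteq> M2"
    using M1(2) M2(2,3) vertical_matching_subset_edges_below[of N j]
    by (auto simp: vertical_matching_Suc)
  ultimately show ?case
    by blast
qed

lemma reaches_vertical_matching:
  assumes "3 \<le> N" "odd N" "1 \<le> m" "M \<in> pms (2 * m - 1) N"
  shows "(M, vertical_matching N m) \<in> (total_resonance (2 * m - 1) N)\<^sup>*"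
proof -
  have "2 * m \<le> Suc (2 * m - 1)" by simp
  then obtain M' where M': "(M, M') \<in> (total_resonance (2 * m - 1) N)\<^sup>*" "vertical_matching N m \<subseteq> M'"
    using reach_superset_of_vertical_matching[OF assms(4,1,2)] by blast
  have "0 < N" using assms(1) by simp
  then have "\<And>e. e \<in> cyl_edges (2 * m - 1) N \<Longrightarrow> e \<noteq> {} \<and> e \<subseteq> cyl_verts (2 * m - 1) N"
    by (rule cyl_edge_subset_verts)
  moreover have "perfect_matching (cyl_verts (2 * m - 1) N) (cyl_edges (2 * m - 1) N) M'"
    using rtrancl_total_resonance_pms[OF M'(1) assms(4)] by (simp add: pms_def)
  moreover have "perfect_matching (cyl_verts (2 * m - 1) N) (cyl_edges (2 * m - 1) N)
      (vertical_matching N m)"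
    using vertical_matching_pms[OF assms(3)] by (simp add: pms_def)
  ultimately have "vertical_matching N m = M'"
    using perfect_matching_subset_eq[OF _ _ M'(2)] by blast
  then show ?thesis
    using M'(1) by simp
qed

lemma sym_total_resonance: "sym (total_resonance k N)"
  unfolding sym_def total_resonance_def by (auto simp: Un_commute)

theorem corollary3p4:
  fixes n m :: nat
  assumes "n \<ge> 1" and "m \<ge> 1"
  shows "graph_connected (pms (2*m - 1) (2*n + 1)) (total_resonance (2*m - 1) (2*n + 1))"
proof -
  let ?k = "2 * m - 1" and ?N = "2 * n + 1"
  let ?R = "total_resonance ?k ?N" and ?V = "vertical_matching ?N m"
  have to_V: "(M, ?V) \<in> ?R\<^sup>*" if "M \<in> pms ?k ?N" for M
    using reaches_vertical_matching[OF _ _ \<open>m \<ge> 1\<close> that] \<open>n \<ge> 1\<close> by simp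
  have "(M, M') \<in> ?R\<^sup>*" if "M \<in> pms ?k ?N" "M' \<in> pms ?k ?N" for M M'
  proof -
    have "(?V, M') \<in> ?R\<^sup>*"
      using symD[OF sym_rtrancl[OF sym_total_resonance] to_V[OF that(2)]] .
    with to_V[OF that(1)] show ?thesis
      by (rule rtrancl_trans)
  qed
  moreover have "?R \<inter> pms ?k ?N \<times> pms ?k ?N = ?R"
    unfolding total_resonance_def by auto
  moreover have "?V \<in> pms ?k ?N"
    using vertical_matching_pms[OF \<open>m \<ge> 1\<close>] .
  ultimately show ?thesis
    unfolding graph_connected_def by auto
qed

end
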